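(* Let $n\ge1$, let $\mathbf{k}=(k_1,\dots,k_n)$ be positive integers and $N=n+|\mathbf{k}|$. The Filling Algorithm, $D\mapsto T(D)$, defines a bijection from $\mathcal{D}_{\mathbf{k}}$ onto $\mathcal{T}_{\mathbf{k}}$.
   Context: $|\mathbf{k}|=k_1+\cdots+k_n$. $\mathcal{D}_{\mathbf{k}}$ is the set of sequences $D=(a_1,\dots,a_N)$ whose positive entries are $k_1,\dots,k_n$ in this order, whose other $|\mathbf{k}|$ entries equal $-1$, and all of whose partial sums $a_1+\cdots+a_{i-1}$ are $\ge0$. Its SW-word $\texttt{SW}(D)=\sigma_1\cdots\sigma_N$ has $\sigma_i=S^{k_j}$ if $a_i=k_j$ and $\sigma_i=W$ if $a_i=-1$. $\mathcal{T}_{\mathbf{k}}$ is the set of arrays with $n$ columns, column $i$ consisting of $k_i+1$ cells in rows $1,\dots,k_i+1$, filled with the numbers $1,\dots,N$ each exactly once, such that entries increase from top to bottom in each column, increase from left to right along each row (among the cells present), and such that for every pair of entries $a<d$ with $d$ directly below $a$, no two entries $b,c$ with $a<b<c<d$ lie in the same column. Filling Algorithm (input $\texttt{SW}(D)$, output $T(D)$): place $1$ at the top of column $1$. Having placed $1,\dots,i-1$, call the bottom-most currently filled entry of column $j$ active if it is not in row $k_j+1$. If the $i$-th letter of $\texttt{SW}(D)$ is $W$, place $i$ immediately below the smallest active entry; otherwise place $i$ at the top of the first (leftmost) empty column. Continue until $1,\dots,N$ are placed. *)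

theory Defs
  imports Main
begin

text \<open>Conventions: the composition k = (k_1,...,k_n) is a list of naturals;
  columns and rows are 0-indexed internally (column j of the paper is index j-1).\<close>

definition Nval :: "nat list \<Rightarrow> nat" where
  "Nval k = length k + sum_list k"

definition D_set :: "nat list \<Rightarrow> int list set" where
  "D_set k = {D. length D = Nval k
      \<and> filter (\<lambda>a. a > 0) D = map int k
      \<and> (\<forall>a\<in>set D. a > 0 \<or> a = -1)
      \<and> (\<forall>i<length D. sum_list (take i D) \<ge> 0)}"

datatype letter = S nat | W

definition SW :: "int list \<Rightarrow> letter list" where
  "SW D = map (\<lambda>a. if a > 0 then S (nat a) else W) D"

text \<open>The set T_k: arrays given as lists of columns (top to bottom).\<close>
definition T_set :: "nat list \<Rightarrow> nat list list set" where
  "T_set k = {T. length T = length k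
      \<and> (\<forall>j<length k. length (T!j) = k!j + 1)
      \<and> distinct (concat T) \<and> set (concat T) = {1..Nval k}
      \<and> (\<forall>j<length k. sorted_wrt (<) (T!j))
      \<and> (\<forall>j j' r. j < j' \<and> j' < length k \<and> r < length (T!j) \<and> r < length (T!j')
            \<longrightarrow> T!j!r < T!j'!r)
      \<and> (\<forall>j r. j < length k \<and> Suc r < length (T!j) \<longrightarrow>
            \<not> (\<exists>j' r1 r2. j' < length k \<and> r1 < length (T!j') \<and> r2 < length (T!j')
                 \<and> T!j!r < T!j'!r1 \<and> T!j'!r1 < T!j'!r2 \<and> T!j'!r2 < T!j!(Suc r)))}"

definition active :: "nat list \<Rightarrow> nat list list \<Rightarrow> nat \<Rightarrow> bool" where
  "active k cols j \<longleftrightarrow> j < length k \<and> cols!j \<noteq> [] \<and> length (cols!j) < k!j + 1"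

fun fill_step :: "nat list \<Rightarrow> nat list list \<Rightarrow> nat \<times> letter \<Rightarrow> nat list list" where
  "fill_step k cols (i, W) =
     (if \<exists>j. active k cols j then
        (let j = (LEAST j. active k cols j \<and>
                    (\<forall>j'. active k cols j' \<longrightarrow> last (cols!j) \<le> last (cols!j')))
         in cols[j := cols!j @ [i]])
      else cols)"
| "fill_step k cols (i, S _) =
     (if \<exists>j<length k. cols!j = [] then
        (let j = (LEAST j. j < length k \<and> cols!j = []) in cols[j := [i]])
      else cols)"

definition fill :: "nat list \<Rightarrow> letter list \<Rightarrow> nat list list" where
  "fill k w = foldl (fill_step k) ((replicate (length k) [])[0 := [1]])
                 (zip [2..<length w + 1] (tl w))"

definition filling_map :: "nat list \<Rightarrow> int list \<Rightarrow> nat list list" where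
  "filling_map k D = fill k (SW D)"

end

theory Submission
  imports Defs
begin

(* The inverse of the Filling Algorithm reads a sequence off a tableau T: its i-th entry is k_j
   if i heads column j of T, and -1 otherwise.

   Along the algorithm the entries placed so far form a partial tableau in which every entry
   with an entry below it is smaller than the bottom entry of every active column, and the
   partial sum a_1 + ... + a_m equals the number of free cells of the columns already started.
   Hence every W finds an active column, and appending below the smallest active bottom creates
   no forbidden pattern; at the end the total sum is 0, so no free cell is left.

   Conversely, for T in T_k the entries of T that are at most m form exactly the array built by
   the algorithm from the read-off sequence after m steps. If m+1 is not at the top of its
   column, its upper neighbour is the smallest active bottom: an active column whose bottom
   entry is smaller would, with the entry below that bottom, enclose the upper neighbour and
   m+1, which is the forbidden pattern. *)

lemma distinct_concat_nth_eq:
  assumes "distinct (concat xss)" "i < length xss" "j < length xss"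
    "a < length (xss!i)" "b < length (xss!j)" "xss!i!a = xss!j!b"
  shows "i = j \<and> a = b"
  using assms
proof (induction xss arbitrary: i j)
  case Nil
  then show ?case by simp
next
  case (Cons xs xss)
  have disj: "set xs \<inter> set (concat xss) = {}" and dxs: "distinct xs"
    using Cons.prems(1) by auto
  have tail: "xss!i'!a' \<in> set (concat xss)" if "i' < length xss" "a' < length (xss!i')" for i' a'
    using that by (auto intro!: bexI[of _ "xss!i'"])
  show ?case
  proof (cases i; cases j)
    assume "i = 0" "j = 0"
    then show ?thesis using Cons.prems dxs by (simp add: nth_eq_iff_index_eq)
  next
    fix j' assume "i = 0" "j = Suc j'"
    then have "xs!a \<in> set xs" "xss!j'!b \<in> set (concat xss)"
      using Cons.prems(3-5) tail[of j' b] by simp_all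
    moreover have "xs!a = xss!j'!b" using Cons.prems(6) \<open>i = 0\<close> \<open>j = Suc j'\<close> by simp
    ultimately show ?thesis using disj by (metis disjoint_iff)
  next
    fix i' assume "i = Suc i'" "j = 0"
    then have "xs!b \<in> set xs" "xss!i'!a \<in> set (concat xss)"
      using Cons.prems(2,4,5) tail[of i' a] by simp_all
    moreover have "xss!i'!a = xs!b" using Cons.prems(6) \<open>i = Suc i'\<close> \<open>j = 0\<close> by simp
    ultimately show ?thesis using disj by (metis disjoint_iff)
  next
    fix i' j' assume "i = Suc i'" "j = Suc j'"
    then show ?thesis using Cons.IH[of i' j'] Cons.prems by auto
  qed
qed

lemma in_set_concat_nth:
  "x \<in> set (concat xss) \<longleftrightarrow> (\<exists>j<length xss. \<exists>r<length (xss!j). xss!j!r = x)"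
  by (fastforce simp: in_set_conv_nth)

lemma strict_sorted_nth_less_iff:
  fixes xs :: "'a::linorder list"
  assumes "sorted_wrt (<) xs" "i < length xs" "j < length xs"
  shows "xs!i < xs!j \<longleftrightarrow> i < j"
  using assms by (metis linorder_neq_iff order_less_asym sorted_wrt_nth_less)

lemma filter_eq_take:
  assumes "l \<le> length xs" "\<forall>i<length xs. P (xs!i) \<longleftrightarrow> i < l"
  shows "filter P xs = take l xs"
proof -
  have "filter P (take l xs) = take l xs"
    using assms by (intro filter_True) (auto simp: in_set_conv_nth)
  moreover have "filter P (drop l xs) = []"
    using assms by (intro filter_False) (auto simp: in_set_conv_nth)
  ultimately show ?thesis
    by (metis append_Nil2 append_take_drop_id filter_append)
qed

lemma filter_le_sorted:
  fixes xs :: "'a::linorder list"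
  assumes "sorted xs"
  obtains l where "l \<le> length xs" "filter (\<lambda>x. x \<le> m) xs = take l xs"
    "\<forall>i<length xs. xs!i \<le> m \<longleftrightarrow> i < l"
proof -
  have "\<exists>l\<le>length xs. \<forall>i<length xs. xs!i \<le> m \<longleftrightarrow> i < l"
    using assms
  proof (induction xs)
    case Nil
    then show ?case by simp
  next
    case (Cons x xs)
    then obtain l where l: "l \<le> length xs" "\<forall>i<length xs. xs!i \<le> m \<longleftrightarrow> i < l" by auto
    show ?case
    proof (cases "x \<le> m")
      case True
      then show ?thesis using l by (intro exI[of _ "Suc l"]) (auto simp: nth_Cons split: nat.splits)
    next
      case False
      have "\<forall>y\<in>set xs. x \<le> y" using Cons.prems by simp
      then have "\<forall>i<length xs. m < xs!i" using False by (simp add: not_le less_le_trans)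
      then show ?thesis using False by (intro exI[of _ 0]) (auto simp: nth_Cons split: nat.splits)
    qed
  qed
  then obtain l where l: "l \<le> length xs" "\<forall>i<length xs. xs!i \<le> m \<longleftrightarrow> i < l" by blast
  show ?thesis by (rule that[OF l(1) filter_eq_take[OF l] l(2)])
qed

lemma filter_le_eq_take_at:
  fixes xs :: "nat list"
  assumes "sorted_wrt (<) xs" "r < length xs" "xs!r = Suc m"
  shows "filter (\<lambda>x. x \<le> m) xs = take r xs" "filter (\<lambda>x. x \<le> Suc m) xs = take (Suc r) xs"
proof -
  have "\<forall>i<length xs. xs!i \<le> m \<longleftrightarrow> i < r"
    using strict_sorted_nth_less_iff[OF assms(1) _ assms(2)] assms(3) by (metis less_Suc_eq_le)
  then show "filter (\<lambda>x. x \<le> m) xs = take r xs" using assms(2) by (intro filter_eq_take) auto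
  have "\<forall>i<length xs. xs!i \<le> Suc m \<longleftrightarrow> i < Suc r"
    using strict_sorted_nth_less_iff[OF assms(1) assms(2)] assms(3) by (metis not_less less_Suc_eq_le)
  then show "filter (\<lambda>x. x \<le> Suc m) xs = take (Suc r) xs" using assms(2) by (intro filter_eq_take) auto
qed

lemma last_take_nth: "0 < r \<Longrightarrow> r \<le> length xs \<Longrightarrow> last (take r xs) = xs!(r - 1)"
  by (subst last_conv_nth) (auto simp: min_def)

definition append_col :: "nat list list \<Rightarrow> nat \<Rightarrow> nat \<Rightarrow> nat list list" where
  "append_col cols j x = cols[j := cols!j @ [x]]"

lemma length_append_col [simp]: "length (append_col cols j x) = length cols"
  by (simp add: append_col_def)

lemma nth_append_col:
  "j < length cols \<Longrightarrow> append_col cols j x ! j' = (if j' = j then cols!j @ [x] else cols!j')"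
  by (simp add: append_col_def)

lemma length_nth_append_col:
  "j < length cols \<Longrightarrow>
   length (append_col cols j x ! j') = (if j' = j then Suc (length (cols!j)) else length (cols!j'))"
  by (simp add: nth_append_col)

lemma nth_nth_append_col:
  assumes "j < length cols" "r < length (append_col cols j x ! j')"
  shows "append_col cols j x ! j' ! r = (if j' = j \<and> r = length (cols!j) then x else cols!j'!r)"
  using assms by (auto simp: nth_append_col nth_append)

lemma set_concat_append_col:
  assumes "j < length cols"
  shows "set (concat (append_col cols j x)) = insert x (set (concat cols))"
proof -
  have "cols = take j cols @ cols!j # drop (Suc j) cols" using assms by (simp add: id_take_nth_drop)
  then have "set (concat cols) = set (concat (take j cols @ cols!j # drop (Suc j) cols))" by simp
  then show ?thesis unfolding append_col_def upd_conv_take_nth_drop[OF assms] by auto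
qed

lemma distinct_concat_append_col:
  assumes "j < length cols" "distinct (concat cols)" "x \<notin> set (concat cols)"
  shows "distinct (concat (append_col cols j x))"
proof -
  have "cols = take j cols @ cols!j # drop (Suc j) cols" using assms by (simp add: id_take_nth_drop)
  then have "distinct (concat (take j cols @ cols!j # drop (Suc j) cols))"
    and "x \<notin> set (concat (take j cols @ cols!j # drop (Suc j) cols))"
    using assms(2,3) by simp_all
  then show ?thesis unfolding append_col_def upd_conv_take_nth_drop[OF assms(1)]
    by (auto simp: distinct_append)
qed

definition free_cells :: "nat list \<Rightarrow> nat list list \<Rightarrow> int" where
  "free_cells k cols =
     (\<Sum>j<length k. if cols!j = [] then 0 else int (k!j) + 1 - int (length (cols!j)))"

lemma free_cells_append_col:
  assumes "j < length k" "length cols = length k"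
  shows "free_cells k (append_col cols j x) = free_cells k cols + (if cols!j = [] then int (k!j) else -1)"
proof -
  let ?f = "\<lambda>cs j. if cs!j = [] then 0 else int (k!j) + 1 - int (length (cs!j))"
  have split: "free_cells k cs = ?f cs j + (\<Sum>j'\<in>{..<length k} - {j}. ?f cs j')" for cs
    unfolding free_cells_def using assms by (simp add: sum.remove)
  have "(\<Sum>j'\<in>{..<length k} - {j}. ?f (append_col cols j x) j') = (\<Sum>j'\<in>{..<length k} - {j}. ?f cols j')"
    using assms by (intro sum.cong) (auto simp: nth_append_col)
  moreover have "?f (append_col cols j x) j = ?f cols j + (if cols!j = [] then int (k!j) else -1)"
    using assms by (auto simp: nth_append_col)
  ultimately show ?thesis using split[of cols] split[of "append_col cols j x"] by simp
qed

definition min_active :: "nat list \<Rightarrow> nat list list \<Rightarrow> nat \<Rightarrow> bool" where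
  "min_active k cols j \<longleftrightarrow> active k cols j \<and>
     (\<forall>j'. active k cols j' \<longrightarrow> j' \<noteq> j \<longrightarrow> last (cols!j) < last (cols!j'))"

lemma fill_step_W_eq:
  assumes "min_active k cols j"
  shows "fill_step k cols (i, W) = append_col cols j i"
proof -
  have j: "active k cols j"
    and less: "\<And>j'. active k cols j' \<Longrightarrow> j' \<noteq> j \<Longrightarrow> last (cols!j) < last (cols!j')"
    using assms unfolding min_active_def by auto
  have "(LEAST j. active k cols j \<and> (\<forall>j'. active k cols j' \<longrightarrow> last (cols!j) \<le> last (cols!j'))) = j"
  proof (rule Least_equality)
    show "active k cols j \<and> (\<forall>j'. active k cols j' \<longrightarrow> last (cols!j) \<le> last (cols!j'))"
      using j less by (metis order_refl less_imp_le)
    fix y assume y: "active k cols y \<and> (\<forall>j'. active k cols j' \<longrightarrow> last (cols!y) \<le> last (cols!j'))"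
    then have "\<not> last (cols!j) < last (cols!y)" using j by (simp add: not_less)
    then show "j \<le> y" using less y by (cases "y = j") auto
  qed
  then show ?thesis using j by (auto simp: append_col_def Let_def)
qed

lemma fill_step_S_eq:
  assumes "j < length k" "cols!j = []" "\<forall>j'<j. cols!j' \<noteq> []"
  shows "fill_step k cols (i, S x) = append_col cols j i"
proof -
  have "(LEAST j. j < length k \<and> cols!j = []) = j"
    using assms by (intro Least_equality) (auto intro: leI)
  then show ?thesis using assms by (auto simp: append_col_def Let_def)
qed

lemma ex_min_active:
  assumes "distinct (concat cols)" "length cols = length k" "active k cols j0"
  obtains j where "min_active k cols j"
proof -
  let ?A = "{j. active k cols j}"
  have fin: "finite ?A" by (rule finite_subset[of _ "{..<length k}"]) (auto simp: active_def)
  have "Min ((\<lambda>j. last (cols!j)) ` ?A) \<in> (\<lambda>j. last (cols!j)) ` ?A"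
    using fin assms(3) by (intro Min_in) auto
  then obtain j where j: "active k cols j" "last (cols!j) = Min ((\<lambda>j. last (cols!j)) ` ?A)"
    by auto
  have "last (cols!j) < last (cols!j')" if "active k cols j'" "j' \<noteq> j" for j'
  proof -
    have "last (cols!j) \<le> last (cols!j')" using j(2) fin that(1) by simp
    moreover have "last (cols!j) \<noteq> last (cols!j')"
      using distinct_concat_nth_eq[OF assms(1), of j j' "length (cols!j) - 1" "length (cols!j') - 1"]
        j(1) that assms(2) by (auto simp: active_def last_conv_nth)
    ultimately show ?thesis by simp
  qed
  then show ?thesis using that j(1) unfolding min_active_def by blast
qed

fun fill_upto :: "nat list \<Rightarrow> letter list \<Rightarrow> nat \<Rightarrow> nat list list" where
  "fill_upto k w 0 = replicate (length k) []"
| "fill_upto k w (Suc i) = fill_step k (fill_upto k w i) (Suc i, w!i)"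

lemma foldl_fill_step_eq_fill_upto:
  "i \<le> length w \<Longrightarrow>
   foldl (fill_step k) (replicate (length k) []) (zip [1..<Suc i] (take i w)) = fill_upto k w i"
proof (induction i)
  case 0
  then show ?case by simp
next
  case (Suc i)
  have "zip [1..<Suc (Suc i)] (take (Suc i) w) = zip [1..<Suc i] (take i w) @ [(Suc i, w!i)]"
    using Suc.prems by (simp add: take_Suc_conv_app_nth)
  then show ?case using Suc by simp
qed

lemma fill_eq_fill_upto:
  assumes "k \<noteq> []"
  shows "fill k (S x # w) = fill_upto k (S x # w) (Suc (length w))"
proof -
  have "(replicate (length k) [])[0 := [1]] = fill_step k (replicate (length k) []) (1, S x)"
    using assms by (subst fill_step_S_eq[of 0]) (auto simp: append_col_def)
  moreover have "[1..<Suc (Suc (length w))] = 1 # [2..<Suc (Suc (length w))]"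
    using upt_conv_Cons[of 1 "Suc (Suc (length w))"] by (simp add: numeral_2_eq_2 del: upt_Suc)
  ultimately show ?thesis
    using foldl_fill_step_eq_fill_upto[of "Suc (length w)" "S x # w" k] by (simp add: fill_def)
qed

lemma Nval_ge_2:
  assumes "length k \<ge> 1" "\<forall>x\<in>set k. x > 0"
  shows "Nval k \<ge> 2"
  using assms by (cases k) (auto simp: Nval_def)

lemma D_set_sum_zero:
  assumes "D \<in> D_set k"
  shows "sum_list D = 0"
proof -
  have pos: "filter (\<lambda>a. a > 0) D = map int k" and len: "length D = Nval k"
    and entries: "\<forall>a\<in>set D. a > 0 \<or> a = -1" using assms by (auto simp: D_set_def)
  have "length (filter (\<lambda>a. \<not> a > 0) D) = sum_list k"
    using sum_length_filter_compl[of "\<lambda>a. a > 0" D] pos len by (simp add: Nval_def)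
  moreover have "filter (\<lambda>a. \<not> a > 0) D = replicate (length (filter (\<lambda>a. \<not> a > 0) D)) (-1)"
    using entries by (auto intro!: replicate_eqI)
  ultimately have "sum_list (filter (\<lambda>a. \<not> a > 0) D) = - int (sum_list k)"
    by (metis mult_minus1_right sum_list_replicate)
  moreover have "sum_list (filter (\<lambda>a. a > 0) D) = int (sum_list k)"
    using pos by (simp add: sum_list_of_nat)
  moreover have "sum_list D = sum_list (filter (\<lambda>a. a > 0) D) + sum_list (filter (\<lambda>a. \<not> a > 0) D)"
    by (induction D) auto
  ultimately show ?thesis by simp
qed

lemma D_set_prefix_sum_nonneg:
  assumes "D \<in> D_set k" "m \<le> length D"
  shows "sum_list (take m D) \<ge> 0"
  using assms D_set_sum_zero[OF assms(1)] by (cases "m = length D") (auto simp: D_set_def)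

lemma D_set_hd_pos:
  assumes "D \<in> D_set k" "length k \<ge> 1" "\<forall>x\<in>set k. x > 0"
  shows "D \<noteq> [] \<and> hd D > 0"
proof -
  have len: "length D \<ge> 2" using assms Nval_ge_2 by (auto simp: D_set_def)
  then obtain a D' where D: "D = a # D'" by (cases D) auto
  have "sum_list (take 1 D) \<ge> 0" using assms(1) len by (auto simp: D_set_def)
  moreover have "a > 0 \<or> a = -1" using assms(1) D by (auto simp: D_set_def)
  ultimately show ?thesis using D by auto
qed

lemma filling_map_eq_fill_upto:
  assumes "D \<in> D_set k" "length k \<ge> 1" "\<forall>x\<in>set k. x > 0"
  shows "filling_map k D = fill_upto k (SW D) (length D)"
proof -
  obtain a D' where D: "D = a # D'" and "a > 0" using D_set_hd_pos[OF assms] by (cases D) auto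
  then have "SW D = S (nat a) # SW D'" by (simp add: SW_def)
  moreover have "k \<noteq> []" using assms(2) by auto
  ultimately show ?thesis using fill_eq_fill_upto by (simp add: filling_map_def D SW_def)
qed

definition num_pos :: "int list \<Rightarrow> nat \<Rightarrow> nat" where
  "num_pos D m = length (filter (\<lambda>a. a > 0) (take m D))"

lemma D_set_pos_entry:
  assumes "D \<in> D_set k" "m < length D" "D!m > 0"
  shows "num_pos D m < length k" "D!m = int (k ! num_pos D m)" "num_pos D (Suc m) = Suc (num_pos D m)"
proof -
  let ?pos = "filter (\<lambda>a. a > 0)"
  have "D = take m D @ D!m # drop (Suc m) D" using assms(2) by (simp add: id_take_nth_drop)
  then have "?pos D = ?pos (take m D) @ D!m # ?pos (drop (Suc m) D)"
    using assms(3) by (metis filter.simps(2) filter_append)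
  moreover have "?pos D = map int k" using assms(1) unfolding D_set_def by blast
  ultimately have split: "map int k = ?pos (take m D) @ D!m # ?pos (drop (Suc m) D)" by simp
  have "length (?pos (take m D)) < length (map int k)" by (subst split) simp
  moreover have "map int k ! length (?pos (take m D)) = D!m" by (subst split) simp
  ultimately show "num_pos D m < length k" "D!m = int (k ! num_pos D m)"
    unfolding num_pos_def by auto
  show "num_pos D (Suc m) = Suc (num_pos D m)"
    using assms(2,3) by (simp add: num_pos_def take_Suc_conv_app_nth)
qed

section \<open>Partial tableaux\<close>

definition rows_increasing :: "nat list list \<Rightarrow> bool" where
  "rows_increasing cols \<longleftrightarrow> (\<forall>j j' r. j < j' \<and> j' < length cols \<and> r < length (cols!j)
     \<and> r < length (cols!j') \<longrightarrow> cols!j!r < cols!j'!r)"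

definition pattern_free :: "nat list list \<Rightarrow> bool" where
  "pattern_free cols \<longleftrightarrow> (\<forall>j r. j < length cols \<and> Suc r < length (cols!j) \<longrightarrow>
     \<not> (\<exists>j' r1 r2. j' < length cols \<and> r1 < length (cols!j') \<and> r2 < length (cols!j')
          \<and> cols!j!r < cols!j'!r1 \<and> cols!j'!r1 < cols!j'!r2 \<and> cols!j'!r2 < cols!j!(Suc r)))"

definition partial_tableau :: "nat list \<Rightarrow> nat \<Rightarrow> nat list list \<Rightarrow> bool" where
  "partial_tableau k m cols \<longleftrightarrow> length cols = length k
     \<and> distinct (concat cols) \<and> set (concat cols) = {1..m}
     \<and> (\<forall>j<length k. sorted_wrt (<) (cols!j) \<and> length (cols!j) \<le> k!j + 1)
     \<and> rows_increasing cols \<and> pattern_free cols"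

lemma T_set_iff:
  "T \<in> T_set k \<longleftrightarrow> partial_tableau k (Nval k) T \<and> (\<forall>j<length k. length (T!j) = k!j + 1)"
  unfolding T_set_def partial_tableau_def rows_increasing_def pattern_free_def
  by (auto simp del: Ex_less_Suc)

lemma T_setD:
  assumes "T \<in> T_set k"
  shows T_set_length: "length T = length k"
    and T_set_col_length: "\<And>j. j < length k \<Longrightarrow> length (T!j) = k!j + 1"
    and T_set_distinct: "distinct (concat T)"
    and T_set_entries: "set (concat T) = {1..Nval k}"
    and T_set_sorted: "\<And>j. j < length k \<Longrightarrow> sorted_wrt (<) (T!j)"
    and T_set_rows: "rows_increasing T"
    and T_set_pattern_free: "pattern_free T"
  using assms unfolding T_set_iff partial_tableau_def by auto

lemma T_set_cell:
  assumes "T \<in> T_set k" "t \<in> {1..Nval k}"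
  obtains j r where "j < length k" "r < length (T!j)" "T!j!r = t"
proof -
  have "t \<in> set (concat T)" using assms(2) T_set_entries[OF assms(1)] by simp
  then show ?thesis using that T_set_length[OF assms(1)] unfolding in_set_concat_nth by auto
qed

lemma T_set_entry_range:
  assumes "T \<in> T_set k" "j < length k" "r < length (T!j)"
  shows "T!j!r \<in> {1..Nval k}"
proof -
  have "T!j!r \<in> set (concat T)" unfolding in_set_concat_nth using assms T_set_length by auto
  then show ?thesis unfolding T_set_entries[OF assms(1)] .
qed

lemma rows_increasing_append_col:
  assumes rows: "rows_increasing cols" and j: "j < length cols"
    and new: "\<forall>y\<in>set (concat cols). y < x"
    and later_short: "\<And>j'. j < j' \<Longrightarrow> j' < length cols \<Longrightarrow> length (cols!j') \<le> length (cols!j)"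
  shows "rows_increasing (append_col cols j x)"
  unfolding rows_increasing_def
proof (intro allI impI)
  let ?C = "append_col cols j x"
  note C_len = length_nth_append_col[OF j, where x = x]
    and C_nth = nth_nth_append_col[OF j, where x = x]
  fix j1 j2 r assume h: "j1 < j2 \<and> j2 < length ?C \<and> r < length (?C!j1) \<and> r < length (?C!j2)"
  have not_new1: "\<not> (j1 = j \<and> r = length (cols!j))"
    using later_short[of j2] h C_len[of j2] by auto
  show "?C!j1!r < ?C!j2!r"
  proof (cases "j2 = j \<and> r = length (cols!j)")
    case True
    then have "r < length (cols!j1)" "?C!j1!r = cols!j1!r" "?C!j2!r = x"
      using h C_nth C_len[of j1] by auto
    moreover have "cols!j1!r \<in> set (concat cols)"
      unfolding in_set_concat_nth using h \<open>r < length (cols!j1)\<close>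
      by (metis length_append_col order.strict_trans)
    ultimately show ?thesis using new by auto
  next
    case False
    then show ?thesis using h not_new1 C_nth C_len rows unfolding rows_increasing_def
      by (auto split: if_splits)
  qed
qed

lemma pattern_free_append_col:
  assumes pat: "pattern_free cols" and j: "j < length cols"
    and sorted: "\<And>j'. j' < length cols \<Longrightarrow> sorted_wrt (<) (cols!j')"
    and new: "\<forall>y\<in>set (concat cols). y < x"
    and inner_small: "\<And>j' s. cols!j \<noteq> [] \<Longrightarrow> j' < length cols \<Longrightarrow> Suc s < length (cols!j')
                        \<Longrightarrow> cols!j'!s < last (cols!j)"
  shows "pattern_free (append_col cols j x)"
  unfolding pattern_free_def
proof (intro allI impI notI)
  let ?C = "append_col cols j x"
  note C_len = length_nth_append_col[OF j, where x = x]
    and C_nth = nth_nth_append_col[OF j, where x = x]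
  have old: "r' < length (cols!j') \<and> ?C!j'!r' = cols!j'!r'"
    if "r' < length (?C!j')" "?C!j'!r' < x" for j' r'
    using that C_nth[OF that(1)] C_len[of j']
    by (cases "j' = j \<and> r' = length (cols!j)") (auto simp: less_Suc_eq split: if_splits)
  have C_le: "?C!j'!r' \<le> x" if "j' < length cols" "r' < length (?C!j')" for j' r'
  proof -
    have "?C!j'!r' \<in> set (concat ?C)" unfolding in_set_concat_nth using that by auto
    then have "?C!j'!r' \<in> insert x (set (concat cols))" by (simp only: set_concat_append_col[OF j])
    then show ?thesis using new by (auto intro: less_imp_le)
  qed
  fix j1 r assume h: "j1 < length ?C \<and> Suc r < length (?C!j1)"
    and "\<exists>j2 r1 r2. j2 < length ?C \<and> r1 < length (?C!j2) \<and> r2 < length (?C!j2)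
           \<and> ?C!j1!r < ?C!j2!r1 \<and> ?C!j2!r1 < ?C!j2!r2 \<and> ?C!j2!r2 < ?C!j1!(Suc r)"
  then obtain j2 r1 r2 where h2: "j2 < length cols" "r1 < length (?C!j2)" "r2 < length (?C!j2)"
    "?C!j1!r < ?C!j2!r1" "?C!j2!r1 < ?C!j2!r2" "?C!j2!r2 < ?C!j1!(Suc r)" by auto
  have j1: "j1 < length cols" using h by simp
  have "?C!j2!r2 < x" using h2(6) C_le[OF j1, of "Suc r"] h by simp
  then have o2: "r2 < length (cols!j2)" "?C!j2!r2 = cols!j2!r2" using old h2(3) by auto
  have "?C!j2!r1 < x" using h2(5) \<open>?C!j2!r2 < x\<close> by simp
  then have o1: "r1 < length (cols!j2)" "?C!j2!r1 = cols!j2!r1" using old h2(2) by auto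
  have "?C!j1!r < x" using h2(4) \<open>?C!j2!r1 < x\<close> by simp
  then have o0: "r < length (cols!j1)" "?C!j1!r = cols!j1!r" using old h by auto
  show False
  proof (cases "j1 = j \<and> Suc r = length (cols!j)")
    case False
    then have "Suc r < length (cols!j1)" "?C!j1!(Suc r) = cols!j1!(Suc r)"
      using h C_nth C_len[of j1] by (auto split: if_splits)
    then show False using pat j1 h2 o0 o1 o2 unfolding pattern_free_def by metis
  next
    case True
    have "r1 < r2"
      using strict_sorted_nth_less_iff[OF sorted[OF h2(1)] o1(1) o2(1)] h2(5) o1 o2 by simp
    moreover have "cols!j \<noteq> []" using True by auto
    ultimately have "cols!j2!r1 < last (cols!j)"
      using inner_small[of j2 r1] h2(1) o2 by auto
    moreover have "last (cols!j) = cols!j1!r"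
      using True last_conv_nth[OF \<open>cols!j \<noteq> []\<close>] by (metis diff_Suc_1)
    ultimately show False using h2(4) o0 o1 by simp
  qed
qed

lemma partial_tableau_append_col:
  assumes P: "partial_tableau k m cols" and j: "j < length k" "length (cols!j) \<le> k!j"
    and later_short: "\<And>j'. j < j' \<Longrightarrow> j' < length k \<Longrightarrow> length (cols!j') \<le> length (cols!j)"
    and inner_small: "\<And>j' s. cols!j \<noteq> [] \<Longrightarrow> j' < length k \<Longrightarrow> Suc s < length (cols!j')
                        \<Longrightarrow> cols!j'!s < last (cols!j)"
  shows "partial_tableau k (Suc m) (append_col cols j (Suc m))"
proof -
  let ?C = "append_col cols j (Suc m)"
  have len: "length cols = length k" and dist: "distinct (concat cols)"
    and set: "set (concat cols) = {1..m}"
    and cols: "\<And>j. j < length k \<Longrightarrow> sorted_wrt (<) (cols!j) \<and> length (cols!j) \<le> k!j + 1"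
    and rows: "rows_increasing cols" and pat: "pattern_free cols"
    using P unfolding partial_tableau_def by auto
  have jl: "j < length cols" using j len by simp
  have new: "\<forall>y\<in>set (concat cols). y < Suc m" using set by auto
  have "\<forall>j'<length k. sorted_wrt (<) (?C!j') \<and> length (?C!j') \<le> k!j' + 1"
  proof (intro allI impI)
    fix j' assume "j' < length k"
    moreover have "\<forall>y\<in>set (cols!j). y < Suc m" using new jl by (auto intro!: bexI[of _ "cols!j"])
    ultimately show "sorted_wrt (<) (?C!j') \<and> length (?C!j') \<le> k!j' + 1"
      using cols j jl by (auto simp: nth_append_col sorted_wrt_append)
  qed
  moreover have "rows_increasing ?C"
    using later_short len by (intro rows_increasing_append_col[OF rows jl new]) auto
  moreover have "pattern_free ?C"
    using cols inner_small len by (intro pattern_free_append_col[OF pat jl _ new]) auto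
  moreover have "set (concat ?C) = {1..Suc m}" using set_concat_append_col[OF jl] set by auto
  moreover have "distinct (concat ?C)"
    using set by (intro distinct_concat_append_col[OF jl dist]) simp
  ultimately show ?thesis unfolding partial_tableau_def length_append_col using len by blast
qed

definition inner_below_active :: "nat list \<Rightarrow> nat list list \<Rightarrow> bool" where
  "inner_below_active k cols \<longleftrightarrow> (\<forall>j' s j. j' < length cols \<and> Suc s < length (cols!j')
     \<and> active k cols j \<longrightarrow> cols!j'!s < last (cols!j))"

lemma inner_below_active_append_col:
  assumes I: "inner_below_active k cols" and j: "j < length cols"
    and new: "\<forall>y\<in>set (concat cols). y < x"
    and min: "cols!j \<noteq> [] \<Longrightarrow> \<forall>j'. active k cols j' \<longrightarrow> j' \<noteq> j \<longrightarrow> last (cols!j) < last (cols!j')"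
  shows "inner_below_active k (append_col cols j x)"
  unfolding inner_below_active_def
proof (intro allI impI)
  let ?C = "append_col cols j x"
  fix j' s j'' assume h: "j' < length ?C \<and> Suc s < length (?C!j') \<and> active k ?C j''"
  have s: "s < length (cols!j')" "?C!j'!s = cols!j'!s"
    using h j by (auto simp: nth_append_col nth_append split: if_splits)
  have "cols!j'!s < x" using new s(1) h in_set_concat_nth[of "cols!j'!s" cols] by auto
  show "?C!j'!s < last (?C!j'')"
  proof (cases "j'' = j")
    case True
    then show ?thesis using s \<open>cols!j'!s < x\<close> j by (simp add: nth_append_col)
  next
    case False
    then have act: "active k cols j''" and last: "last (?C!j'') = last (cols!j'')"
      using h j by (auto simp: active_def nth_append_col)
    show ?thesis
    proof (cases "j' = j \<and> Suc s = length (cols!j)")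
      case True
      then have "cols!j'!s = last (cols!j)" by (metis diff_Suc_1 last_conv_nth list.size(3) nat.distinct(1))
      moreover have "cols!j \<noteq> []" using True by auto
      ultimately show ?thesis using min act False True s(2) last by auto
    next
      case False
      then have "Suc s < length (cols!j')" using h j by (auto simp: nth_append_col split: if_splits)
      then show ?thesis using I act h s(2) last unfolding inner_below_active_def by simp
    qed
  qed
qed

lemma length_le_active_col:
  assumes "rows_increasing cols" "inner_below_active k cols" "active k cols j"
    "j < j'" "j' < length cols"
  shows "length (cols!j') \<le> length (cols!j)"
proof (rule ccontr)
  let ?r = "length (cols!j) - 1"
  assume "\<not> ?thesis"
  moreover have "cols!j \<noteq> []" using assms(3) by (simp add: active_def)
  ultimately have "?r < length (cols!j)" "Suc ?r < length (cols!j')" by auto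
  then have "cols!j!?r < cols!j'!?r" and "cols!j'!?r < last (cols!j)"
    using assms unfolding rows_increasing_def inner_below_active_def by auto
  then show False using \<open>cols!j \<noteq> []\<close> by (simp add: last_conv_nth)
qed

lemma free_cells_pos_active:
  assumes "partial_tableau k m cols" "free_cells k cols > 0"
  obtains j where "active k cols j"
proof -
  have "\<exists>j<length k. cols!j \<noteq> [] \<and> int (k!j) + 1 - int (length (cols!j)) \<noteq> 0"
  proof (rule ccontr)
    assume "\<not> ?thesis"
    then have "free_cells k cols = 0" unfolding free_cells_def by (intro sum.neutral) auto
    then show False using assms(2) by simp
  qed
  then show ?thesis
    using assms(1) that unfolding partial_tableau_def active_def by (fastforce simp: le_less)
qed

section \<open>The Filling Algorithm maps D_k into T_k\<close>

text \<open>Entry t was placed by the letter D!(t - 1): lists are indexed from 0.\<close>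
definition fill_inv :: "nat list \<Rightarrow> int list \<Rightarrow> nat \<Rightarrow> nat list list \<Rightarrow> bool" where
  "fill_inv k D m cols \<longleftrightarrow> partial_tableau k m cols \<and> inner_below_active k cols
     \<and> (\<forall>j<length k. cols!j \<noteq> [] \<longleftrightarrow> j < num_pos D m)
     \<and> (\<forall>j<length k. \<forall>r<length (cols!j). D!(cols!j!r - 1) = (if r = 0 then int (k!j) else -1))
     \<and> sum_list (take m D) = free_cells k cols"

lemma fill_inv_append_S:
  assumes D: "D \<in> D_set k" and I: "fill_inv k D m cols" and m: "m < length D" and pos: "D!m > 0"
  shows "fill_inv k D (Suc m) (append_col cols (num_pos D m) (Suc m))"
proof -
  let ?c = "num_pos D m"
  let ?C = "append_col cols ?c (Suc m)"
  have c: "?c < length k" "D!m = int (k!?c)" "num_pos D (Suc m) = Suc ?c"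
    using D_set_pos_entry[OF D m pos] by auto
  from I have P: "partial_tableau k m cols" and Q: "inner_below_active k cols"
    and started: "\<forall>j<length k. cols!j \<noteq> [] \<longleftrightarrow> j < ?c"
    and letters: "\<forall>j<length k. \<forall>r<length (cols!j). D!(cols!j!r - 1) = (if r = 0 then int (k!j) else -1)"
    and sum: "sum_list (take m D) = free_cells k cols"
    unfolding fill_inv_def by auto
  have len: "length cols = length k" and set: "set (concat cols) = {1..m}"
    using P unfolding partial_tableau_def by auto
  have empty: "cols!j = []" if "?c \<le> j" "j < length k" for j using started that by auto
  have C: "?C!j = (if j = ?c then [Suc m] else cols!j)" for j
    using c(1) len empty[of ?c] by (simp add: nth_append_col)
  have "partial_tableau k (Suc m) ?C"
    using c(1) empty by (intro partial_tableau_append_col[OF P]) auto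
  moreover have "inner_below_active k ?C"
    using c(1) len set empty[of ?c] by (intro inner_below_active_append_col[OF Q]) auto
  moreover have "\<forall>j<length k. ?C!j \<noteq> [] \<longleftrightarrow> j < num_pos D (Suc m)"
    using started c(3) C by auto
  moreover have "\<forall>j<length k. \<forall>r<length (?C!j). D!(?C!j!r - 1) = (if r = 0 then int (k!j) else -1)"
    using letters c(2) C by auto
  moreover have "sum_list (take (Suc m) D) = free_cells k ?C"
    using sum free_cells_append_col[OF c(1) len] empty[of ?c] c(1,2) m
    by (simp add: take_Suc_conv_app_nth)
  ultimately show ?thesis unfolding fill_inv_def by blast
qed

lemma fill_inv_append_W:
  assumes I: "fill_inv k D m cols" and m: "m < length D" and neg: "D!m = -1"
    and j: "min_active k cols j"
  shows "fill_inv k D (Suc m) (append_col cols j (Suc m))"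
proof -
  let ?C = "append_col cols j (Suc m)"
  from I have P: "partial_tableau k m cols" and Q: "inner_below_active k cols"
    and started: "\<forall>j<length k. cols!j \<noteq> [] \<longleftrightarrow> j < num_pos D m"
    and letters: "\<forall>j<length k. \<forall>r<length (cols!j). D!(cols!j!r - 1) = (if r = 0 then int (k!j) else -1)"
    and sum: "sum_list (take m D) = free_cells k cols"
    unfolding fill_inv_def by auto
  have len: "length cols = length k" and set: "set (concat cols) = {1..m}"
    and rows: "rows_increasing cols" using P unfolding partial_tableau_def by auto
  have act: "active k cols j" using j by (simp add: min_active_def)
  then have jk: "j < length k" and ne: "cols!j \<noteq> []" and room: "length (cols!j) \<le> k!j"
    by (auto simp: active_def)
  have C: "?C!j' = (if j' = j then cols!j @ [Suc m] else cols!j')" for j'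
    using jk len by (simp add: nth_append_col)
  have "partial_tableau k (Suc m) ?C"
  proof (rule partial_tableau_append_col[OF P jk room])
    show "length (cols!j') \<le> length (cols!j)" if "j < j'" "j' < length k" for j'
      using length_le_active_col[OF rows Q act] that len by simp
    show "cols!j'!s < last (cols!j)" if "j' < length k" "Suc s < length (cols!j')" for j' s
      using Q act that len unfolding inner_below_active_def by auto
  qed
  moreover have "inner_below_active k ?C"
    using jk len set j by (intro inner_below_active_append_col[OF Q]) (auto simp: min_active_def)
  moreover have "num_pos D (Suc m) = num_pos D m"
    using m neg by (simp add: num_pos_def take_Suc_conv_app_nth)
  then have "\<forall>j'<length k. ?C!j' \<noteq> [] \<longleftrightarrow> j' < num_pos D (Suc m)"
    using started ne jk C by auto
  moreover have "\<forall>j'<length k. \<forall>r<length (?C!j'). D!(?C!j'!r - 1) = (if r = 0 then int (k!j') else -1)"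
    using letters neg ne C by (auto simp: nth_append less_Suc_eq)
  moreover have "sum_list (take (Suc m) D) = free_cells k ?C"
    using sum free_cells_append_col[OF jk len] ne m neg by (simp add: take_Suc_conv_app_nth)
  ultimately show ?thesis unfolding fill_inv_def by blast
qed

lemma fill_inv_fill_step:
  assumes D: "D \<in> D_set k" and I: "fill_inv k D m cols" and m: "m < length D"
  shows "fill_inv k D (Suc m) (fill_step k cols (Suc m, SW D ! m))"
proof -
  have "D!m > 0 \<or> D!m = -1" using D m by (auto simp: D_set_def)
  then show ?thesis
  proof
    assume pos: "D!m > 0"
    have c: "num_pos D m < length k" using D_set_pos_entry[OF D m pos] by simp
    have "\<forall>j<length k. cols!j \<noteq> [] \<longleftrightarrow> j < num_pos D m" using I by (simp add: fill_inv_def)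
    then have "fill_step k cols (Suc m, S (nat (D!m))) = append_col cols (num_pos D m) (Suc m)"
      using c by (intro fill_step_S_eq) auto
    moreover have "SW D ! m = S (nat (D!m))" using m pos by (simp add: SW_def)
    ultimately have "fill_step k cols (Suc m, SW D ! m) = append_col cols (num_pos D m) (Suc m)"
      by simp
    then show ?thesis using fill_inv_append_S[OF D I m pos] by simp
  next
    assume neg: "D!m = -1"
    have P: "partial_tableau k m cols" and sum: "sum_list (take m D) = free_cells k cols"
      using I by (auto simp: fill_inv_def)
    have "sum_list (take (Suc m) D) \<ge> 0" using D_set_prefix_sum_nonneg[OF D] m by simp
    then have "free_cells k cols > 0" using sum neg m by (simp add: take_Suc_conv_app_nth)
    then obtain j0 where "active k cols j0" using free_cells_pos_active[OF P] by blast
    then obtain j where j: "min_active k cols j"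
      using ex_min_active P unfolding partial_tableau_def by blast
    have "SW D ! m = W" using m neg by (simp add: SW_def)
    then have "fill_step k cols (Suc m, SW D ! m) = append_col cols j (Suc m)"
      using fill_step_W_eq[OF j] by simp
    then show ?thesis using fill_inv_append_W[OF I m neg j] by simp
  qed
qed

lemma fill_inv_fill_upto:
  assumes D: "D \<in> D_set k"
  shows "i \<le> length D \<Longrightarrow> fill_inv k D i (fill_upto k (SW D) i)"
proof (induction i)
  case 0
  show ?case
    by (auto simp: fill_inv_def partial_tableau_def rows_increasing_def pattern_free_def
        inner_below_active_def num_pos_def free_cells_def)
next
  case (Suc i)
  then show ?case using fill_inv_fill_step[OF D] by simp
qed

lemma fill_inv_filling_map:
  assumes "D \<in> D_set k" "length k \<ge> 1" "\<forall>x\<in>set k. x > 0"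
  shows "fill_inv k D (Nval k) (filling_map k D)"
  using fill_inv_fill_upto[OF assms(1), of "length D"] filling_map_eq_fill_upto[OF assms] assms(1)
  by (simp add: D_set_def)

lemma filling_map_in_T_set:
  assumes D: "D \<in> D_set k" and k: "length k \<ge> 1" "\<forall>x\<in>set k. x > 0"
  shows "filling_map k D \<in> T_set k"
proof -
  define T where "T = filling_map k D"
  have I: "fill_inv k D (Nval k) T" using fill_inv_filling_map[OF D k] by (simp add: T_def)
  have lenD: "length D = Nval k" and pos: "filter (\<lambda>a. a > 0) D = map int k"
    using D by (auto simp: D_set_def)
  then have "num_pos D (Nval k) = length k" by (simp add: num_pos_def)
  then have P: "partial_tableau k (Nval k) T" and ne: "\<forall>j<length k. T!j \<noteq> []"
    and sum: "free_cells k T = 0"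
    using I D_set_sum_zero[OF D] lenD by (auto simp: fill_inv_def)
  have room: "\<forall>j<length k. length (T!j) \<le> k!j + 1" using P by (simp add: partial_tableau_def)
  then have full: "\<forall>j\<in>{..<length k}. int (k!j) + 1 - int (length (T!j)) = 0"
    using sum ne unfolding free_cells_def by (subst (asm) sum_nonneg_eq_0_iff) auto
  have "\<forall>j<length k. length (T!j) = k!j + 1"
  proof (intro allI impI)
    fix j assume "j < length k"
    then have "int (k!j) + 1 - int (length (T!j)) = 0" using full by blast
    then show "length (T!j) = k!j + 1" by linarith
  qed
  then show ?thesis using P unfolding T_def T_set_iff by simp
qed

section \<open>Reading a sequence off a tableau\<close>

text \<open>Only evaluated at entries of T, where the cell is unique.\<close>
definition cell_of :: "nat list list \<Rightarrow> nat \<Rightarrow> nat \<times> nat" where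
  "cell_of T t = (THE (j, r). j < length T \<and> r < length (T!j) \<and> T!j!r = t)"

definition cell_letter :: "nat list \<Rightarrow> nat list list \<Rightarrow> nat \<Rightarrow> int" where
  "cell_letter k T t = (case cell_of T t of (j, r) \<Rightarrow> if r = 0 then int (k!j) else -1)"

definition seq_of_tableau :: "nat list \<Rightarrow> nat list list \<Rightarrow> int list" where
  "seq_of_tableau k T = map (cell_letter k T) [1..<Nval k + 1]"

lemma length_seq_of_tableau [simp]: "length (seq_of_tableau k T) = Nval k"
  by (simp add: seq_of_tableau_def)

lemma cell_of_nth:
  assumes "distinct (concat T)" "j < length T" "r < length (T!j)"
  shows "cell_of T (T!j!r) = (j, r)"
  unfolding cell_of_def
  by (rule the_equality) (use distinct_concat_nth_eq[OF assms(1)] assms in auto)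

lemma cell_letter_nth:
  assumes "T \<in> T_set k" "j < length k" "r < length (T!j)"
  shows "cell_letter k T (T!j!r) = (if r = 0 then int (k!j) else -1)"
  using cell_of_nth[OF T_set_distinct[OF assms(1)]] assms T_set_length[OF assms(1)]
  by (simp add: cell_letter_def)

lemma seq_of_tableau_nth:
  assumes "T \<in> T_set k" "j < length k" "r < length (T!j)" "T!j!r = Suc m"
  shows "seq_of_tableau k T ! m = (if r = 0 then int (k!j) else -1)"
proof -
  have "m < Nval k" using T_set_entry_range[OF assms(1-3)] assms(4) by simp
  then have "seq_of_tableau k T ! m = cell_letter k T (Suc m)"
    by (simp add: seq_of_tableau_def del: upt_Suc)
  then show ?thesis using cell_letter_nth[OF assms(1-3)] assms(4) by simp
qed

lemma seq_of_tableau_filling_map: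
  assumes D: "D \<in> D_set k" and k: "length k \<ge> 1" "\<forall>x\<in>set k. x > 0"
  shows "seq_of_tableau k (filling_map k D) = D"
proof (rule nth_equalityI)
  let ?T = "filling_map k D"
  have T: "?T \<in> T_set k" using filling_map_in_T_set[OF D k] .
  have letters: "\<forall>j<length k. \<forall>r<length (?T!j). D!(?T!j!r - 1) = (if r = 0 then int (k!j) else -1)"
    using fill_inv_filling_map[OF D k] by (simp add: fill_inv_def)
  show "length (seq_of_tableau k ?T) = length D" using D by (simp add: D_set_def)
  fix m assume "m < length (seq_of_tableau k ?T)"
  then have "Suc m \<in> {1..Nval k}" by simp
  then obtain j r where jr: "j < length k" "r < length (?T!j)" "?T!j!r = Suc m"
    using T_set_cell[OF T] by blast
  show "seq_of_tableau k ?T ! m = D!m"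
    using seq_of_tableau_nth[OF T jr] letters jr by force
qed

section \<open>Refilling a tableau from its sequence\<close>

definition subtableau :: "nat \<Rightarrow> nat list list \<Rightarrow> nat list list" where
  "subtableau m T = map (filter (\<lambda>x. x \<le> m)) T"

lemma subtableau_0:
  assumes "T \<in> T_set k"
  shows "subtableau 0 T = replicate (length k) []"
proof (rule nth_equalityI)
  show "length (subtableau 0 T) = length (replicate (length k) [])"
    using T_set_length[OF assms] by (simp add: subtableau_def)
  fix j assume "j < length (subtableau 0 T)"
  then have j: "j < length k" using T_set_length[OF assms] by (simp add: subtableau_def)
  have "\<forall>x\<in>set (T!j). x \<noteq> 0"
    using T_set_entry_range[OF assms j] by (fastforce simp: in_set_conv_nth)
  then show "subtableau 0 T ! j = replicate (length k) [] ! j"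
    using j T_set_length[OF assms] by (simp add: subtableau_def filter_empty_conv)
qed

lemma subtableau_Nval:
  assumes "T \<in> T_set k"
  shows "subtableau (Nval k) T = T"
  unfolding subtableau_def
proof (rule map_idI)
  fix xs assume "xs \<in> set T"
  then have "\<forall>x\<in>set xs. x \<le> Nval k" using T_set_entries[OF assms] by auto
  then show "filter (\<lambda>x. x \<le> Nval k) xs = xs" by simp
qed

lemma subtableau_Suc:
  assumes T: "T \<in> T_set k" and j: "j < length k" "r < length (T!j)" "T!j!r = Suc m"
  shows "subtableau m T ! j = take r (T!j)"
    and "subtableau (Suc m) T = append_col (subtableau m T) j (Suc m)"
proof -
  have len: "length T = length k" using T_set_length[OF T] .
  have sorted: "sorted_wrt (<) (T!j)" using T_set_sorted[OF T j(1)] .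
  show col: "subtableau m T ! j = take r (T!j)"
    using filter_le_eq_take_at(1)[OF sorted j(2,3)] j len by (simp add: subtableau_def)
  have other: "filter (\<lambda>x. x \<le> Suc m) (T!j') = filter (\<lambda>x. x \<le> m) (T!j')"
    if "j' < length T" "j' \<noteq> j" for j'
  proof -
    have "Suc m \<notin> set (T!j')"
    proof
      assume "Suc m \<in> set (T!j')"
      then obtain r' where "r' < length (T!j')" "T!j'!r' = Suc m" by (auto simp: in_set_conv_nth)
      then show False
        using distinct_concat_nth_eq[OF T_set_distinct[OF T], of j j' r r'] j len that by simp
    qed
    then show ?thesis by (intro filter_cong) (auto simp: le_Suc_eq)
  qed
  show "subtableau (Suc m) T = append_col (subtableau m T) j (Suc m)"
  proof (rule nth_equalityI)
    fix j' assume "j' < length (subtableau (Suc m) T)"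
    then have "j' < length T" by (simp add: subtableau_def)
    moreover have "take (Suc r) (T!j) = take r (T!j) @ [Suc m]"
      using j by (simp add: take_Suc_conv_app_nth)
    ultimately show "subtableau (Suc m) T ! j' = append_col (subtableau m T) j (Suc m) ! j'"
      using filter_le_eq_take_at(2)[OF sorted j(2,3)] col other j len
      by (simp add: subtableau_def nth_append_col)
  qed (simp add: subtableau_def)
qed

lemma min_active_subtableau:
  assumes T: "T \<in> T_set k" and j: "j < length k" "r < length (T!j)" "T!j!r = Suc m" "0 < r"
  shows "min_active k (subtableau m T) j"
proof -
  let ?P = "subtableau m T"
  have len: "length T = length k" using T_set_length[OF T] .
  have Pj: "?P!j = take r (T!j)" using subtableau_Suc(1)[OF T j(1-3)] .
  have act: "active k ?P j"
    using Pj j T_set_col_length[OF T j(1)] len by (auto simp: active_def subtableau_def)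
  have last_j: "last (?P!j) = T!j!(r - 1)" using Pj j last_take_nth[of r "T!j"] by simp
  have "last (?P!j) < last (?P!j')" if act': "active k ?P j'" and "j' \<noteq> j" for j'
  proof (rule ccontr)
    have j': "j' < length k" using act' by (simp add: active_def)
    obtain l where l: "l \<le> length (T!j')" "?P!j' = take l (T!j')"
      "\<forall>i<length (T!j'). T!j'!i \<le> m \<longleftrightarrow> i < l"
      using filter_le_sorted[OF strict_sorted_imp_sorted[OF T_set_sorted[OF T j']]] j' len
      by (metis nth_map subtableau_def)
    have "0 < l" "l < length (T!j')"
      using act' l(1,2) T_set_col_length[OF T j'] by (auto simp: active_def)
    then have last_j': "last (?P!j') = T!j'!(l - 1)" and d: "m < T!j'!l"
      using l last_take_nth[of l "T!j'"] by auto
    have "T!j'!l \<noteq> Suc m"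
      using distinct_concat_nth_eq[OF T_set_distinct[OF T], of j j' r l] j j' len
        \<open>l < length (T!j')\<close> \<open>j' \<noteq> j\<close> by auto
    with d have cd: "T!j!r < T!j'!l" using j(3) by simp
    have "r - 1 < length (T!j)" "l - 1 < length (T!j')" using j(2) \<open>l < length (T!j')\<close> by auto
    then have "T!j!(r - 1) \<noteq> T!j'!(l - 1)"
      using distinct_concat_nth_eq[OF T_set_distinct[OF T], of j j' "r - 1" "l - 1"] j j' len
        \<open>j' \<noteq> j\<close> by auto
    moreover assume "\<not> last (?P!j) < last (?P!j')"
    ultimately have ab: "T!j'!(l - 1) < T!j!(r - 1)" using last_j last_j' by simp
    have bc: "T!j!(r - 1) < T!j!r"
      using strict_sorted_nth_less_iff[OF T_set_sorted[OF T j(1)], of "r - 1" r] j by simp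
    have "Suc (l - 1) < length (T!j')" "Suc (l - 1) = l" using \<open>0 < l\<close> \<open>l < length (T!j')\<close> by auto
    then show False
      using T_set_pattern_free[OF T] j j' len ab bc cd unfolding pattern_free_def
      by (metis diff_less less_imp_diff_less zero_less_one)
  qed
  then show ?thesis using act unfolding min_active_def by blast
qed

lemma fill_step_subtableau:
  assumes T: "T \<in> T_set k" and k: "\<forall>x\<in>set k. x > 0" and m: "m < Nval k"
  shows "fill_step k (subtableau m T) (Suc m, SW (seq_of_tableau k T) ! m) = subtableau (Suc m) T"
proof -
  obtain j r where j: "j < length k" "r < length (T!j)" "T!j!r = Suc m"
    using T_set_cell[OF T, of "Suc m"] m by auto
  have len: "length T = length k" using T_set_length[OF T] .
  have mlen: "m < length (seq_of_tableau k T)" using m by simp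
  note step = subtableau_Suc(2)[OF T j]
  show ?thesis
  proof (cases "r = 0")
    case True
    have "seq_of_tableau k T ! m = int (k!j)" and "k!j > 0"
      using seq_of_tableau_nth[OF T j] True k j(1) by auto
    then have letter: "SW (seq_of_tableau k T) ! m = S (k!j)" using mlen by (simp add: SW_def)
    have "subtableau m T ! j' \<noteq> []" if "j' < j" for j'
    proof -
      have "T!j'!0 < T!j!0"
        using T_set_rows[OF T] that j T_set_col_length[OF T] len unfolding rows_increasing_def by auto
      then have "T!j'!0 \<in> set (subtableau m T ! j')"
        using that j True T_set_col_length[OF T] len by (simp add: subtableau_def)
      then show ?thesis by auto
    qed
    moreover have "subtableau m T ! j = []" using subtableau_Suc(1)[OF T j] True by simp
    ultimately show ?thesis unfolding letter step using j(1) by (intro fill_step_S_eq) auto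
  next
    case False
    have "SW (seq_of_tableau k T) ! m = W"
      using seq_of_tableau_nth[OF T j] False mlen by (simp add: SW_def)
    then show ?thesis unfolding step
      using fill_step_W_eq[OF min_active_subtableau[OF T j]] False by simp
  qed
qed

lemma fill_upto_seq_of_tableau:
  assumes T: "T \<in> T_set k" and k: "\<forall>x\<in>set k. x > 0"
  shows "i \<le> Nval k \<Longrightarrow> fill_upto k (SW (seq_of_tableau k T)) i = subtableau i T"
proof (induction i)
  case 0
  then show ?case using subtableau_0[OF T] by simp
next
  case (Suc i)
  then show ?case using fill_step_subtableau[OF T k, of i] by simp
qed

lemma prefix_sum_seq_of_tableau:
  assumes T: "T \<in> T_set k"
  shows "i \<le> Nval k \<Longrightarrow> sum_list (take i (seq_of_tableau k T)) = free_cells k (subtableau i T)"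
proof (induction i)
  case 0
  then show ?case using subtableau_0[OF T] by (simp add: free_cells_def)
next
  case (Suc m)
  obtain j r where j: "j < length k" "r < length (T!j)" "T!j!r = Suc m"
    using T_set_cell[OF T, of "Suc m"] Suc.prems by auto
  have len: "length (subtableau m T) = length k" using T_set_length[OF T] by (simp add: subtableau_def)
  have "m < length (seq_of_tableau k T)" using Suc.prems by simp
  then have "sum_list (take (Suc m) (seq_of_tableau k T))
        = sum_list (take m (seq_of_tableau k T)) + seq_of_tableau k T ! m"
    by (simp add: take_Suc_conv_app_nth)
  also have "\<dots> = free_cells k (subtableau m T) + (if r = 0 then int (k!j) else -1)"
    using Suc seq_of_tableau_nth[OF T j] by simp
  also have "\<dots> = free_cells k (subtableau (Suc m) T)"
    using free_cells_append_col[OF j(1) len] subtableau_Suc[OF T j] j(2) by auto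
  finally show ?case .
qed

lemma free_cells_subtableau_nonneg:
  assumes "T \<in> T_set k"
  shows "free_cells k (subtableau m T) \<ge> 0"
  unfolding free_cells_def
proof (rule sum_nonneg)
  fix j assume "j \<in> {..<length k}"
  then have "length (subtableau m T ! j) \<le> k!j + 1"
    using T_set_length[OF assms] T_set_col_length[OF assms] length_filter_le[of _ "T!j"]
    by (simp add: subtableau_def)
  then show "0 \<le> (if subtableau m T ! j = [] then 0
                  else int (k!j) + 1 - int (length (subtableau m T ! j)))" by simp
qed

lemma filter_pos_seq_of_tableau:
  assumes T: "T \<in> T_set k" and k: "\<forall>x\<in>set k. x > 0"
  shows "filter (\<lambda>a. a > 0) (seq_of_tableau k T) = map int k"
proof -
  let ?N = "Nval k"
  let ?tops = "map (\<lambda>j. T!j!0) [0..<length k]"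
  have len: "length T = length k" using T_set_length[OF T] .
  have top: "0 < length (T!j)" if "j < length k" for j using T_set_col_length[OF T that] by simp
  have pos_iff: "cell_letter k T t > 0 \<longleftrightarrow> t \<in> set ?tops" if t: "t \<in> {1..?N}" for t
  proof -
    obtain j r where jr: "j < length k" "r < length (T!j)" "T!j!r = t" using T_set_cell[OF T t] .
    have "t \<in> set ?tops \<longleftrightarrow> r = 0"
      using distinct_concat_nth_eq[OF T_set_distinct[OF T], of _ j 0 r] jr top len by force
    then show ?thesis using cell_letter_nth[OF T jr(1,2)] jr k by auto
  qed
  have "filter (\<lambda>t. cell_letter k T t > 0) [1..<?N + 1] = ?tops"
  proof (rule sorted_distinct_set_unique)
    have "sorted_wrt (<) (filter (\<lambda>t. cell_letter k T t > 0) [1..<?N + 1])"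
      by (rule sorted_wrt_filter) (rule sorted_wrt_upt)
    then show "sorted (filter (\<lambda>t. cell_letter k T t > 0) [1..<?N + 1])"
      "distinct (filter (\<lambda>t. cell_letter k T t > 0) [1..<?N + 1])"
      unfolding strict_sorted_iff by blast+
    have "sorted_wrt (<) ?tops"
      using T_set_rows[OF T] top len unfolding sorted_wrt_iff_nth_less rows_increasing_def by auto
    then show "sorted ?tops" "distinct ?tops" by (simp_all add: strict_sorted_iff)
    have "set ?tops \<subseteq> {1..?N}" using T_set_entry_range[OF T] top by auto
    then show "set (filter (\<lambda>t. cell_letter k T t > 0) [1..<?N + 1]) = set ?tops"
      using pos_iff by (auto simp del: upt_Suc)
  qed
  then have "filter (\<lambda>a. a > 0) (seq_of_tableau k T) = map (cell_letter k T) ?tops"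
    by (simp add: seq_of_tableau_def filter_map comp_def)
  also have "\<dots> = map int k"
    using cell_letter_nth[OF T _ top] by (auto intro: nth_equalityI)
  finally show ?thesis .
qed

lemma seq_of_tableau_in_D_set:
  assumes T: "T \<in> T_set k" and k: "\<forall>x\<in>set k. x > 0"
  shows "seq_of_tableau k T \<in> D_set k"
proof -
  have "\<forall>t\<in>{1..Nval k}. cell_letter k T t > 0 \<or> cell_letter k T t = -1"
  proof
    fix t assume "t \<in> {1..Nval k}"
    then obtain j r where jr: "j < length k" "r < length (T!j)" "T!j!r = t" using T_set_cell[OF T] by blast
    then show "cell_letter k T t > 0 \<or> cell_letter k T t = -1"
      using cell_letter_nth[OF T jr(1,2)] k by auto
  qed
  then have "\<forall>a\<in>set (seq_of_tableau k T). a > 0 \<or> a = -1"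
    by (auto simp: seq_of_tableau_def simp del: upt_Suc)
  moreover have "\<forall>i<length (seq_of_tableau k T). sum_list (take i (seq_of_tableau k T)) \<ge> 0"
  proof (intro allI impI)
    fix i assume "i < length (seq_of_tableau k T)"
    then have "i \<le> Nval k" by simp
    then show "sum_list (take i (seq_of_tableau k T)) \<ge> 0"
      using prefix_sum_seq_of_tableau[OF T] free_cells_subtableau_nonneg[OF T] by simp
  qed
  ultimately show ?thesis
    using filter_pos_seq_of_tableau[OF T k] by (simp add: D_set_def)
qed

lemma filling_map_seq_of_tableau:
  assumes T: "T \<in> T_set k" and k: "length k \<ge> 1" "\<forall>x\<in>set k. x > 0"
  shows "filling_map k (seq_of_tableau k T) = T"
  using filling_map_eq_fill_upto[OF seq_of_tableau_in_D_set[OF T k(2)] k]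
    fill_upto_seq_of_tableau[OF T k(2), of "Nval k"] subtableau_Nval[OF T]
  by simp

theorem mainTheorem2:
  fixes k :: "nat list"
  assumes "length k \<ge> 1" and "\<forall>x\<in>set k. x > 0"
  shows "bij_betw (filling_map k) (D_set k) (T_set k)"
  by (rule bij_betw_byWitness[where f' = "seq_of_tableau k"])
    (use assms seq_of_tableau_filling_map filling_map_seq_of_tableau filling_map_in_T_set
       seq_of_tableau_in_D_set in auto)

end
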